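(* Let $K=K_0\supset K_1\supset K_2\supset\cdots$ be a module with a decreasing filtration by submodules (with the convention $K_q=K_0$ for $q<0$), and for each integer $r\ge -1$ let $\partial_r:K\to K$ be a linear map with $\partial_r(K_p)\subset K_p$ for all $p$, $\partial_{-1}=0$, and $\partial_r\circ\partial_s=0$ for all $r,s\ge -1$. For $r\ge -1$ and integers $p$ put $Z^r_p=\{x\in K_p:\ \partial_r x\in K_{p+r}\}$. Assume the following property: for all $r\ge 0$ and all $p$, if $x\in Z^r_p$ or $x\in Z^{r-1}_p$, then $\partial_r x-\partial_{r-1}x\in Z^{r-1}_{p+r}$. Then $Z^{r-1}_{p+1}\subset Z^r_p$ for all $r\ge 0$ and all $p\ge 0$.
   Context: The maps $\partial_r$ play the role of varying boundary operators converging in the filtration topology. *)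

theory Defs
  imports Complex_Main
begin

definition Zset :: "(int \<Rightarrow> 'k set) \<Rightarrow> (int \<Rightarrow> 'k \<Rightarrow> 'k) \<Rightarrow> int \<Rightarrow> int \<Rightarrow> 'k set" where
  "Zset F d r p = {x \<in> F p. d r x \<in> F (p + r)}"

end

theory Submission
  imports Defs
begin

text \<open>For \<open>x \<in> Z\<^sup>r\<^sup>-\<^sup>1\<^sub>p\<^sub>+\<^sub>1\<close> the hypothesis puts \<open>\<partial>\<^sub>r x - \<partial>\<^sub>r\<^sub>-\<^sub>1 x\<close> into
  \<open>K\<^sub>p\<^sub>+\<^sub>r\<^sub>+\<^sub>1 \<subseteq> K\<^sub>p\<^sub>+\<^sub>r\<close>, while \<open>\<partial>\<^sub>r\<^sub>-\<^sub>1 x \<in> K\<^sub>p\<^sub>+\<^sub>r\<close> by definition of \<open>Z\<^sup>r\<^sup>-\<^sup>1\<^sub>p\<^sub>+\<^sub>1\<close>;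
  their sum \<open>\<partial>\<^sub>r x\<close> therefore lies in \<open>K\<^sub>p\<^sub>+\<^sub>r\<close>, and \<open>x \<in> K\<^sub>p\<^sub>+\<^sub>1 \<subseteq> K\<^sub>p\<close>.
  Only the decrease of the filtration and the additive closure of its terms are needed.\<close>

lemma Zset_pred_shift_subset:
  fixes F :: "int \<Rightarrow> 'k::ab_group_add set"
  assumes F_dec: "\<And>q. F (q + 1) \<subseteq> F q"
    and F_add: "\<And>q x y. x \<in> F q \<Longrightarrow> y \<in> F q \<Longrightarrow> x + y \<in> F q"
    and diff_mem: "\<And>x. x \<in> Zset F d (r - 1) (p + 1) \<Longrightarrow> d r x - d (r - 1) x \<in> F (p + r + 1)"
  shows "Zset F d (r - 1) (p + 1) \<subseteq> Zset F d r p"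
proof
  fix x assume x: "x \<in> Zset F d (r - 1) (p + 1)"
  then have "d r x - d (r - 1) x \<in> F (p + r)"
    using diff_mem F_dec[of "p + r"] by blast
  moreover have "d (r - 1) x \<in> F (p + r)"
    using x by (simp add: Zset_def)
  ultimately have "d r x \<in> F (p + r)"
    using F_add by fastforce
  moreover have "x \<in> F p"
    using x F_dec[of p] by (auto simp: Zset_def)
  ultimately show "x \<in> Zset F d r p"
    by (simp add: Zset_def)
qed

theorem mainTheorem2:
  fixes scale :: "'a::comm_ring_1 \<Rightarrow> 'k::ab_group_add \<Rightarrow> 'k"
    and F :: "int \<Rightarrow> 'k set"
    and d :: "int \<Rightarrow> 'k \<Rightarrow> 'k"
  assumes mod: "module scale"
    and F_sub: "\<And>p. module.subspace scale (F p)"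
    and F_0: "F 0 = UNIV"
    and F_neg: "\<And>q. q < 0 \<Longrightarrow> F q = F 0"
    and F_dec: "\<And>p. F (p + 1) \<subseteq> F p"
    and d_lin: "\<And>r. r \<ge> -1 \<Longrightarrow> module_hom scale scale (d r)"
    and d_filt: "\<And>r p. r \<ge> -1 \<Longrightarrow> d r ` F p \<subseteq> F p"
    and d_m1: "d (-1) = (\<lambda>x. 0)"
    and d_sq: "\<And>r s x. r \<ge> -1 \<Longrightarrow> s \<ge> -1 \<Longrightarrow> d r (d s x) = 0"
    and Zprop: "\<And>r p x. r \<ge> 0 \<Longrightarrow> x \<in> Zset F d r p \<or> x \<in> Zset F d (r - 1) p \<Longrightarrow>
                 d r x - d (r - 1) x \<in> Zset F d (r - 1) (p + r)"
  shows "\<And>r p. r \<ge> 0 \<Longrightarrow> p \<ge> 0 \<Longrightarrow> Zset F d (r - 1) (p + 1) \<subseteq> Zset F d r p"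
proof -
  fix r p :: int
  assume r: "r \<ge> 0"
  have F_add: "\<And>q x y. x \<in> F q \<Longrightarrow> y \<in> F q \<Longrightarrow> x + y \<in> F q"
    by (rule module.subspace_add[OF mod F_sub])
  have diff_mem: "d r x - d (r - 1) x \<in> F (p + r + 1)" if "x \<in> Zset F d (r - 1) (p + 1)" for x
  proof -
    have "d r x - d (r - 1) x \<in> Zset F d (r - 1) (p + 1 + r)"
      using Zprop[OF r] that by blast
    then show ?thesis
      by (simp add: Zset_def add.commute add.left_commute)
  qed
  show "Zset F d (r - 1) (p + 1) \<subseteq> Zset F d r p"
    by (rule Zset_pred_shift_subset[where F = F, OF F_dec F_add diff_mem])
qed

end
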